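(* Let $\mathcal{Y}_n$ be a finite periodic box in $\tilde\varepsilon_n\mathbb{Z}\times\varepsilon_n\mathbb{Z}^3$ and $\mathcal{Y}_0\subset\mathcal{Y}_n$ a finite periodic box in $\mathbb{Z}\times\mathbb{Z}^3$. On $\mathbb{C}^{\mathcal{Y}_0}$ and $\mathbb{C}^{\mathcal{Y}_n}$ use the real bilinear forms $\langle f,g\rangle_0=\sum_{x\in\mathcal{Y}_0}f(x)g(x)$ and $\langle f,g\rangle_n=\tilde\varepsilon_n\varepsilon_n^3\sum_{u\in\mathcal{Y}_n}f(u)g(u)$; for pairs, $\langle [a;b],[c;d]\rangle=\langle a,c\rangle+\langle b,d\rangle$, and adjoints ${}^*$ are transposes with respect to these forms. Let $Q_n:\mathbb{C}^{\mathcal{Y}_n}\to\mathbb{C}^{\mathcal{Y}_0}$ be the map with $(Q_nf)(x)$ the average of $f$ over the box in $\mathcal{Y}_n$ of side $1$ centered at $x\in\mathcal{Y}_0$ (acting componentwise on pairs). Let $\Delta$ be the discrete Laplacian on $\mathcal{Y}_n$ and let $\partial_0$ be a time-derivative operator on $\mathbb{C}^{\mathcal{Y}_n}$ which is treated as a continuum derivative, i.e. $\partial_0^*=-\partial_0$. Let $d_n>0$, $\mu_n>0$, $v_n>0$, $r_n=\sqrt{\mu_n/v_n}$, and $$A_n(\psi_*,\psi,\phi_*,\phi)=\langle \psi_*-Q_n\phi_*,\psi-Q_n\phi\rangle_0+\langle\phi_*,(-d_n\partial_0-\Delta)\phi\rangle_n-\mu_n\langle\phi_*,\phi\rangle_n+\tfrac{v_n}{2}\langle\phi_*\phi,\phi_*\phi\rangle_n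 .$$ Define $$\square=\begin{bmatrix}2\mu_n-\Delta & i\,d_n\partial_0^*\\ i\,d_n\partial_0 & -\Delta\end{bmatrix}+Q_n^*Q_n .$$ For fields $R,\Theta\in\mathbb{C}^{\mathcal{Y}_0}$ set $\psi=r_ne^{R+i\Theta}$, $\psi_*=r_ne^{R-i\Theta}$, and let $X,H\in\mathbb{C}^{\mathcal{Y}_n}$ be given by $\begin{bmatrix}X\\H\end{bmatrix}=\square^{-1}Q_n^*\begin{bmatrix}R\\ \Theta\end{bmatrix}$, with $\phi=r_ne^{X+iH}$, $\phi_*=r_ne^{X-iH}$. Then $$\frac{1}{r_n^2}A_n(\psi_*,\psi,\phi_*,\phi)=\Big\langle\begin{bmatrix}R\\ \Theta\end{bmatrix},\big\{\mathbb{1}-Q_n\square^{-1}Q_n^*\big\}\begin{bmatrix}R\\ \Theta\end{bmatrix}\Big\rangle_0-\frac{r_n^2v_n}{2}\langle 1,1\rangle_n+O[3],$$ where $O[3]=O(X^3+R^3+H^3+\Theta^3)$ denotes terms of total degree at least three in the fields $R,\Theta,X,H$.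
   Context: This is a model computation of the quadratic approximation of a simplified effective action near the bottom of the "Mexican hat" potential well, whose minima lie on the circle $|\phi|=r_n=\sqrt{\mu_n/v_n}$. The fields $R,X$ are "radial" and $\Theta,H$ "tangential" fluctuations; the defining relation for $(X,H)$ is the linearization (in $R,\Theta,X,H$) of the background field equations $Q_n^*(Q_n\phi-\psi)+D_n\phi+(v_n\phi_*\phi-\mu_n)\phi=0$, $Q_n^*(Q_n\phi_*-\psi_* )+D_n^*\phi_*+(v_n\phi_*\phi-\mu_n)\phi_*=0$ with $D_n=-d_n\partial_0-\Delta$. The convention $\partial_0^*=-\partial_0$ (pretending the forward difference $\partial_0$ is a continuum derivative) is a standing assumption of this computation. Products of fields such as $\phi_*\phi$ are pointwise. *)

theory Defs
  imports Complex_Main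
begin

text \<open>Lattice points are integer quadruples (time index, three space indices).
  The fine lattice Y_n has spacing 1/T in time and 1/N in space (so that
  Y_0 \<subseteq> Y_n); it is the periodic box with M0*T time sites and M*N sites in
  each space direction, i.e. physical periods M0 (time) and M (space).\<close>

type_synonym pt = "int \<times> int \<times> int \<times> int"
type_synonym field = "pt \<Rightarrow> complex"

definition Y0 :: "nat \<Rightarrow> nat \<Rightarrow> pt set" where
  "Y0 M0 M = {0..<int M0} \<times> {0..<int M} \<times> {0..<int M} \<times> {0..<int M}"

definition Yn :: "nat \<Rightarrow> nat \<Rightarrow> nat \<Rightarrow> nat \<Rightarrow> pt set" where
  "Yn T N M0 M = {0..<int (M0*T)} \<times> {0..<int (M*N)} \<times> {0..<int (M*N)} \<times> {0..<int (M*N)}"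

definition wrapn :: "nat \<Rightarrow> nat \<Rightarrow> nat \<Rightarrow> nat \<Rightarrow> pt \<Rightarrow> pt" where
  "wrapn T N M0 M u = (case u of (a, b, c, e) \<Rightarrow>
     (a mod int (M0*T), b mod int (M*N), c mod int (M*N), e mod int (M*N)))"

definition emb :: "nat \<Rightarrow> nat \<Rightarrow> pt \<Rightarrow> pt" where
  "emb T N x = (case x of (a, b, c, e) \<Rightarrow> (a * int T, b * int N, c * int N, e * int N))"

definition padd :: "pt \<Rightarrow> pt \<Rightarrow> pt" where
  "padd u w = (case u of (a, b, c, e) \<Rightarrow> case w of (a', b', c', e') \<Rightarrow>
     (a + a', b + b', c + c', e + e'))"

text \<open>Offsets (in fine-lattice index units) of the points of the box of side 1
  centred at a point: |offset| < 1/2 in physical units in every coordinate.\<close>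
definition blk :: "nat \<Rightarrow> nat \<Rightarrow> pt set" where
  "blk T N = {j0. 2 * \<bar>j0\<bar> < int T} \<times> {j. 2 * \<bar>j\<bar> < int N}
             \<times> {j. 2 * \<bar>j\<bar> < int N} \<times> {j. 2 * \<bar>j\<bar> < int N}"

definition ip0 :: "nat \<Rightarrow> nat \<Rightarrow> field \<Rightarrow> field \<Rightarrow> complex" where
  "ip0 M0 M f g = (\<Sum>x\<in>Y0 M0 M. f x * g x)"

definition ipn :: "nat \<Rightarrow> nat \<Rightarrow> nat \<Rightarrow> nat \<Rightarrow> field \<Rightarrow> field \<Rightarrow> complex" where
  "ipn T N M0 M f g = (1 / of_nat T) * (1 / of_nat N) ^ 3 * (\<Sum>u\<in>Yn T N M0 M. f u * g u)"

definition ip0p :: "nat \<Rightarrow> nat \<Rightarrow> field \<times> field \<Rightarrow> field \<times> field \<Rightarrow> complex" where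
  "ip0p M0 M p q = ip0 M0 M (fst p) (fst q) + ip0 M0 M (snd p) (snd q)"

definition ipnp :: "nat \<Rightarrow> nat \<Rightarrow> nat \<Rightarrow> nat \<Rightarrow> field \<times> field \<Rightarrow> field \<times> field \<Rightarrow> complex" where
  "ipnp T N M0 M p q = ipn T N M0 M (fst p) (fst q) + ipn T N M0 M (snd p) (snd q)"

definition Qn :: "nat \<Rightarrow> nat \<Rightarrow> nat \<Rightarrow> nat \<Rightarrow> field \<Rightarrow> field" where
  "Qn T N M0 M f x = (1 / of_nat (card (blk T N))) *
      (\<Sum>j\<in>blk T N. f (wrapn T N M0 M (padd (emb T N x) j)))"

text \<open>Its adjoint (transpose) Q_n^* : C^{Y_0} \<rightarrow> C^{Y_n} with respect to the forms
  ip0 and ipn, i.e. ip0 (Qn f) g = ipn f (Qn_adj g).\<close>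
definition Qn_adj :: "nat \<Rightarrow> nat \<Rightarrow> nat \<Rightarrow> nat \<Rightarrow> field \<Rightarrow> field" where
  "Qn_adj T N M0 M g u = (of_nat T * of_nat N ^ 3 / of_nat (card (blk T N))) *
      (\<Sum>x\<in>Y0 M0 M. of_nat (card {j\<in>blk T N. wrapn T N M0 M (padd (emb T N x) j) = u}) * g x)"

definition Qnp :: "nat \<Rightarrow> nat \<Rightarrow> nat \<Rightarrow> nat \<Rightarrow> field \<times> field \<Rightarrow> field \<times> field" where
  "Qnp T N M0 M p = (Qn T N M0 M (fst p), Qn T N M0 M (snd p))"

definition Qn_adjp :: "nat \<Rightarrow> nat \<Rightarrow> nat \<Rightarrow> nat \<Rightarrow> field \<times> field \<Rightarrow> field \<times> field" where
  "Qn_adjp T N M0 M p = (Qn_adj T N M0 M (fst p), Qn_adj T N M0 M (snd p))"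

definition lap :: "nat \<Rightarrow> nat \<Rightarrow> nat \<Rightarrow> nat \<Rightarrow> field \<Rightarrow> field" where
  "lap T N M0 M f u = of_nat N ^ 2 *
     ((f (wrapn T N M0 M (padd u (0,1,0,0))) + f (wrapn T N M0 M (padd u (0,-1,0,0))) - 2 * f (wrapn T N M0 M u))
    + (f (wrapn T N M0 M (padd u (0,0,1,0))) + f (wrapn T N M0 M (padd u (0,0,-1,0))) - 2 * f (wrapn T N M0 M u))
    + (f (wrapn T N M0 M (padd u (0,0,0,1))) + f (wrapn T N M0 M (padd u (0,0,0,-1))) - 2 * f (wrapn T N M0 M u)))"

text \<open>A general linear operator on C^{Y_n}, given by its kernel K (matrix entries),
  and its adjoint (transpose) with respect to ipn (the weight is constant, so the
  transpose w.r.t. ipn is the transposed kernel).  The time derivative \<partial>_0 is such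
  an operator.\<close>
definition kop :: "nat \<Rightarrow> nat \<Rightarrow> nat \<Rightarrow> nat \<Rightarrow> (pt \<Rightarrow> pt \<Rightarrow> complex) \<Rightarrow> field \<Rightarrow> field" where
  "kop T N M0 M K f u = (\<Sum>u'\<in>Yn T N M0 M. K u u' * f u')"

definition kop_adj :: "nat \<Rightarrow> nat \<Rightarrow> nat \<Rightarrow> nat \<Rightarrow> (pt \<Rightarrow> pt \<Rightarrow> complex) \<Rightarrow> field \<Rightarrow> field" where
  "kop_adj T N M0 M K f u = (\<Sum>u'\<in>Yn T N M0 M. K u' u * f u')"

definition sq :: "nat \<Rightarrow> nat \<Rightarrow> nat \<Rightarrow> nat \<Rightarrow> (pt \<Rightarrow> pt \<Rightarrow> complex) \<Rightarrow> real \<Rightarrow> real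
                  \<Rightarrow> field \<times> field \<Rightarrow> field \<times> field" where
  "sq T N M0 M K d \<mu> p =
    ((\<lambda>u. 2 * of_real \<mu> * fst p u - lap T N M0 M (fst p) u
          + \<i> * of_real d * kop_adj T N M0 M K (snd p) u
          + Qn_adj T N M0 M (Qn T N M0 M (fst p)) u),
     (\<lambda>u. \<i> * of_real d * kop T N M0 M K (fst p) u - lap T N M0 M (snd p) u
          + Qn_adj T N M0 M (Qn T N M0 M (snd p)) u))"

text \<open>Elements of C^{Y_n} x C^{Y_n} are represented by pairs of functions vanishing off Y_n.\<close>
definition suppn :: "nat \<Rightarrow> nat \<Rightarrow> nat \<Rightarrow> nat \<Rightarrow> field \<times> field \<Rightarrow> bool" where
  "suppn T N M0 M p \<longleftrightarrow> (\<forall>u. u \<notin> Yn T N M0 M \<longrightarrow> fst p u = 0 \<and> snd p u = 0)"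

definition eq_on_n :: "nat \<Rightarrow> nat \<Rightarrow> nat \<Rightarrow> nat \<Rightarrow> field \<times> field \<Rightarrow> field \<times> field \<Rightarrow> bool" where
  "eq_on_n T N M0 M p q \<longleftrightarrow> (\<forall>u\<in>Yn T N M0 M. fst p u = fst q u \<and> snd p u = snd q u)"

definition sq_invertible :: "nat \<Rightarrow> nat \<Rightarrow> nat \<Rightarrow> nat \<Rightarrow> (pt \<Rightarrow> pt \<Rightarrow> complex) \<Rightarrow> real \<Rightarrow> real \<Rightarrow> bool" where
  "sq_invertible T N M0 M K d \<mu> \<longleftrightarrow>
     (\<forall>g. \<exists>!p. suppn T N M0 M p \<and> eq_on_n T N M0 M (sq T N M0 M K d \<mu> p) g)"

definition sq_inv :: "nat \<Rightarrow> nat \<Rightarrow> nat \<Rightarrow> nat \<Rightarrow> (pt \<Rightarrow> pt \<Rightarrow> complex) \<Rightarrow> real \<Rightarrow> real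
                  \<Rightarrow> field \<times> field \<Rightarrow> field \<times> field" where
  "sq_inv T N M0 M K d \<mu> g = (THE p. suppn T N M0 M p \<and> eq_on_n T N M0 M (sq T N M0 M K d \<mu> p) g)"

definition An :: "nat \<Rightarrow> nat \<Rightarrow> nat \<Rightarrow> nat \<Rightarrow> (pt \<Rightarrow> pt \<Rightarrow> complex) \<Rightarrow> real \<Rightarrow> real \<Rightarrow> real
                  \<Rightarrow> field \<Rightarrow> field \<Rightarrow> field \<Rightarrow> field \<Rightarrow> complex" where
  "An T N M0 M K d \<mu> v \<psi>s \<psi> \<phi>s \<phi> =
     ip0 M0 M (\<lambda>x. \<psi>s x - Qn T N M0 M \<phi>s x) (\<lambda>x. \<psi> x - Qn T N M0 M \<phi> x)
   + ipn T N M0 M \<phi>s (\<lambda>u. - of_real d * kop T N M0 M K \<phi> u - lap T N M0 M \<phi> u)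
   - of_real \<mu> * ipn T N M0 M \<phi>s \<phi>
   + of_real v / 2 * ipn T N M0 M (\<lambda>u. \<phi>s u * \<phi> u) (\<lambda>u. \<phi>s u * \<phi> u)"

definition nrm0 :: "nat \<Rightarrow> nat \<Rightarrow> field \<Rightarrow> real" where
  "nrm0 M0 M f = Max ((\<lambda>x. cmod (f x)) ` Y0 M0 M)"

definition nrmn :: "nat \<Rightarrow> nat \<Rightarrow> nat \<Rightarrow> nat \<Rightarrow> field \<Rightarrow> real" where
  "nrmn T N M0 M f = Max ((\<lambda>u. cmod (f u)) ` Yn T N M0 M)"

end

theory Submission
  imports Defs
begin

text \<open>With \<open>\<psi>\<^sub>\<plusminus> = r exp (R \<plusminus> i\<Theta>)\<close>, \<open>\<phi>\<^sub>\<plusminus> = r exp (X \<plusminus> iH)\<close> and \<open>v r\<^sup>2 = \<mu>\<close>, the action divided by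
  \<open>r\<^sup>2\<close> equals
  \<open>\<langle>e^(R-i\<Theta>) - Q e^(X-iH), e^(R+i\<Theta>) - Q e^(X+iH)\<rangle>\<^sub>0 + \<langle>e^(X-iH), D e^(X+iH)\<rangle>\<^sub>n + \<mu> \<langle>e^(4X)/2 - e^(2X), 1\<rangle>\<^sub>n\<close>
  with \<open>D = -d\<partial>\<^sub>0 - \<Delta>\<close>. Expanding the exponentials to second order (\<open>D\<close> annihilates
  constants and its range is orthogonal to them) leaves \<open>-\<mu>/2 \<langle>1, 1\<rangle>\<^sub>n\<close> plus a quadratic form
  in \<open>(R, \<Theta>, X, H)\<close>, with Taylor remainders bounded by a constant times the cube of the sup
  norm of the fields. The equations defining \<open>(X, H)\<close> are the stationarity equations of that
  quadratic form, so pairing them with \<open>(X, H)\<close> evaluates it as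
  \<open>\<langle>[R; \<Theta>], (1 - Q \<box>\<inverse> Q\<^sup>*) [R; \<Theta>]\<rangle>\<^sub>0\<close>.\<close>

lemma norm_exp_minus_taylor_le:
  fixes z :: "'a :: {banach, real_normed_field}"
  assumes "norm z \<le> 1/2"
  shows "norm (exp z - (\<Sum>j<k. z ^ j / fact j)) \<le> 2 * norm z ^ k"
proof -
  have sums: "(\<lambda>i. z ^ (i + k) /\<^sub>R fact (i + k)) sums (exp z - (\<Sum>j<k. z ^ j /\<^sub>R fact j))"
    by (intro sums_split_initial_segment exp_converges)
  have summable_norms: "summable (\<lambda>i. norm (z ^ (i + k) / fact (i + k)))"
    using summable_norm_exp[of z]
    by (intro summable_ignore_initial_segment)
       (simp add: norm_mult norm_divide divide_inverse mult.commute scaleR_conv_of_real)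
  have geom: "(\<lambda>i. norm z ^ k * norm z ^ i) sums (norm z ^ k * (1 / (1 - norm z)))"
    using assms by (intro sums_mult geometric_sums) auto
  have "exp z - (\<Sum>j<k. z ^ j / fact j) = (\<Sum>i. z ^ (i + k) / fact (i + k))"
    using sums by (simp add: sums_iff scaleR_conv_of_real divide_inverse mult.commute)
  also have "norm \<dots> \<le> (\<Sum>i. norm (z ^ (i + k) / fact (i + k)))"
    using summable_norms by (rule summable_norm)
  also have "\<dots> \<le> (\<Sum>i. norm z ^ k * norm z ^ i)"
  proof (rule suminf_le[OF _ summable_norms sums_summable[OF geom]])
    fix i
    have "norm (z ^ (i + k) / fact (i + k)) \<le> norm z ^ (i + k)"
      by (simp add: norm_divide norm_power divide_le_eq mult_le_cancel_left1)
    then show "norm (z ^ (i + k) / fact (i + k)) \<le> norm z ^ k * norm z ^ i"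
      by (simp add: power_add mult.commute)
  qed
  also have "\<dots> = norm z ^ k * (1 / (1 - norm z))"
    using geom by (simp add: sums_iff)
  also have "\<dots> \<le> norm z ^ k * 2"
    using assms by (intro mult_left_mono) (auto simp: field_simps)
  finally show ?thesis by simp
qed

lemma norm_exp_minus_taylor_le_bound:
  fixes z :: "'a :: {banach, real_normed_field}"
  assumes "norm z \<le> \<epsilon>" "\<epsilon> \<le> 1/2"
  shows "norm (exp z - (\<Sum>j<k. z ^ j / fact j)) \<le> 2 * \<epsilon> ^ k"
  using norm_exp_minus_taylor_le[of z k] power_mono[OF assms(1) norm_ge_zero, of k] assms
  by linarith

lemma norm_exp_minus_one_le:
  fixes z :: "'a :: {banach, real_normed_field}"
  shows "norm z \<le> \<epsilon> \<Longrightarrow> \<epsilon> \<le> 1/2 \<Longrightarrow> norm (exp z - 1) \<le> 2 * \<epsilon>"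
  using norm_exp_minus_taylor_le_bound[of z \<epsilon> 1] by simp

lemma norm_exp_minus_linear_le:
  fixes z :: "'a :: {banach, real_normed_field}"
  shows "norm z \<le> \<epsilon> \<Longrightarrow> \<epsilon> \<le> 1/2 \<Longrightarrow> norm (exp z - 1 - z) \<le> 2 * \<epsilon>\<^sup>2"
  using norm_exp_minus_taylor_le_bound[of z \<epsilon> 2] by (simp add: eval_nat_numeral diff_diff_add)

lemma norm_exp_minus_quadratic_le:
  fixes z :: "'a :: {banach, real_normed_field}"
  shows "norm z \<le> \<epsilon> \<Longrightarrow> \<epsilon> \<le> 1/2 \<Longrightarrow> norm (exp z - 1 - z - z\<^sup>2 / 2) \<le> 2 * \<epsilon> ^ 3"
  using norm_exp_minus_taylor_le_bound[of z \<epsilon> 3] by (simp add: eval_nat_numeral diff_diff_add)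

lemma norm_mult_perturb_le:
  fixes a b s t :: "'a :: real_normed_algebra"
  assumes "norm a \<le> A" "norm b \<le> A" "norm s \<le> B" "norm t \<le> B" "B \<le> A"
  shows "norm ((a + s) * (b + t) - a * b) \<le> 3 * (A * B)"
proof -
  have "0 \<le> B" "0 \<le> A"
    using order_trans[OF norm_ge_zero assms(3)] assms(5) by auto
  have "(a + s) * (b + t) - a * b = a * t + s * b + s * t"
    by (simp add: algebra_simps)
  also have "norm \<dots> \<le> norm a * norm t + norm s * norm b + norm s * norm t"
    by (metis add_mono norm_mult_ineq norm_triangle_le)
  also have "\<dots> \<le> A * B + B * A + B * B"
    using assms \<open>0 \<le> A\<close> \<open>0 \<le> B\<close> by (intro add_mono mult_mono) auto
  also have "\<dots> \<le> 3 * (A * B)"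
    using mult_right_mono[OF \<open>B \<le> A\<close> \<open>0 \<le> B\<close>] by (simp add: mult.commute)
  finally show ?thesis .
qed

lemma sum_card_fibres:
  assumes "finite B" "finite Y" "h ` B \<subseteq> Y"
  shows "(\<Sum>u\<in>Y. of_nat (card {j\<in>B. h j = u}) * F u) = (\<Sum>j\<in>B. F (h j) :: 'a :: comm_semiring_1)"
proof -
  have "(\<Sum>u\<in>Y. of_nat (card {j\<in>B. h j = u}) * F u) = (\<Sum>u\<in>Y. \<Sum>j\<in>B. if h j = u then F u else 0)"
    using assms(1) by (simp add: sum.inter_filter[symmetric])
  also have "\<dots> = (\<Sum>j\<in>B. \<Sum>u\<in>Y. if h j = u then F u else 0)"
    by (rule sum.swap)
  also have "\<dots> = (\<Sum>j\<in>B. F (h j))"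
    using assms by (intro sum.cong) (auto simp: sum.delta')
  finally show ?thesis .
qed

definition pneg :: "pt \<Rightarrow> pt" where
  "pneg e = (case e of (a, b, c, f) \<Rightarrow> (-a, -b, -c, -f))"

lemma pneg_pneg [simp]: "pneg (pneg e) = e"
  by (cases e) (simp add: pneg_def)

locale periodic_lattices =
  fixes T N M0 M :: nat
  assumes T_pos: "T \<ge> 1" and N_pos: "N \<ge> 1" and M0_pos: "M0 \<ge> 1" and M_pos: "M \<ge> 1"
begin

abbreviation "Y\<^sub>n \<equiv> Yn T N M0 M"
abbreviation "Y\<^sub>0 \<equiv> Y0 M0 M"
abbreviation "wrap \<equiv> wrapn T N M0 M"
abbreviation "ip\<^sub>n \<equiv> ipn T N M0 M"
abbreviation "ip\<^sub>0 \<equiv> ip0 M0 M"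
abbreviation "Q \<equiv> Qn T N M0 M"
abbreviation "Qadj \<equiv> Qn_adj T N M0 M"
abbreviation "\<Delta> \<equiv> lap T N M0 M"

lemma finite_Yn: "finite Y\<^sub>n"
  unfolding Yn_def by auto

lemma finite_Y0: "finite Y\<^sub>0"
  unfolding Y0_def by auto

lemma norm_le_nrm0: "x \<in> Y\<^sub>0 \<Longrightarrow> norm (f x) \<le> nrm0 M0 M f"
  unfolding nrm0_def using finite_Y0 by (intro Max_ge) auto

lemma norm_le_nrmn: "u \<in> Y\<^sub>n \<Longrightarrow> norm (f u) \<le> nrmn T N M0 M f"
  unfolding nrmn_def using finite_Yn by (intro Max_ge) auto

lemma Y0_nonempty: "(0, 0, 0, 0) \<in> Y\<^sub>0"
  using M0_pos M_pos unfolding Y0_def by auto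

lemma finite_blk: "finite (blk T N)"
proof -
  have "finite {j::int. 2 * \<bar>j\<bar> < int n}" for n
    by (rule finite_subset[of _ "{-int n..int n}"]) auto
  then show ?thesis unfolding blk_def by auto
qed

lemma card_blk_pos: "card (blk T N) > 0"
proof -
  have "(0, 0, 0, 0) \<in> blk T N"
    using T_pos N_pos unfolding blk_def by auto
  then show ?thesis
    using finite_blk card_gt_0_iff by blast
qed

lemma wrap_in_Yn: "wrap u \<in> Y\<^sub>n"
  using T_pos N_pos M0_pos M_pos unfolding Yn_def wrapn_def by (cases u) auto

lemma wrap_Yn: "u \<in> Y\<^sub>n \<Longrightarrow> wrap u = u"
  unfolding Yn_def wrapn_def by (cases u) auto

lemma wrap_shift_back:
  assumes "u \<in> Y\<^sub>n"
  shows "wrap (padd (wrap (padd u e)) (pneg e)) = u"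
proof -
  have cancel: "0 \<le> x \<Longrightarrow> x < n \<Longrightarrow> ((x + y) mod n - y) mod n = x" for x y n :: int
    by (metis add_diff_cancel_right' mod_diff_left_eq mod_pos_pos_trivial)
  show ?thesis
    using assms unfolding wrapn_def padd_def pneg_def Yn_def by (cases u; cases e) (simp add: cancel)
qed

lemma bij_wrap_shift: "bij_betw (\<lambda>u. wrap (padd u e)) Y\<^sub>n Y\<^sub>n"
proof (rule bij_betw_byWitness[where f' = "\<lambda>u. wrap (padd u (pneg e))"])
  show "\<forall>u\<in>Y\<^sub>n. wrap (padd (wrap (padd u e)) (pneg e)) = u"
    using wrap_shift_back by blast
  show "\<forall>u\<in>Y\<^sub>n. wrap (padd (wrap (padd u (pneg e))) e) = u"
    using wrap_shift_back[of _ "pneg e"] by simp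
qed (use wrap_in_Yn in blast)+

lemma sum_wrap_shift: "(\<Sum>u\<in>Y\<^sub>n. F (wrap (padd u e))) = (\<Sum>u\<in>Y\<^sub>n. F u)"
  using sum.reindex_bij_betw[OF bij_wrap_shift] .

lemma sum_mult_wrap_shift:
  fixes f g :: "pt \<Rightarrow> 'a :: comm_semiring_0"
  shows "(\<Sum>u\<in>Y\<^sub>n. f u * g (wrap (padd u e))) = (\<Sum>u\<in>Y\<^sub>n. g u * f (wrap (padd u (pneg e))))"
proof -
  have "(\<Sum>u\<in>Y\<^sub>n. g u * f (wrap (padd u (pneg e))))
      = (\<Sum>u\<in>Y\<^sub>n. g (wrap (padd u e)) * f (wrap (padd (wrap (padd u e)) (pneg e))))"
    by (rule sum_wrap_shift[symmetric])
  also have "\<dots> = (\<Sum>u\<in>Y\<^sub>n. f u * g (wrap (padd u e)))"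
    by (rule sum.cong) (simp_all add: wrap_shift_back mult.commute)
  finally show ?thesis by simp
qed

lemma ipn_commute: "ip\<^sub>n f g = ip\<^sub>n g f"
  unfolding ipn_def by (simp add: mult.commute)

lemma ipn_left_linear:
  shows ipn_add_left: "ip\<^sub>n (\<lambda>u. f u + g u) h = ip\<^sub>n f h + ip\<^sub>n g h"
    and ipn_diff_left: "ip\<^sub>n (\<lambda>u. f u - g u) h = ip\<^sub>n f h - ip\<^sub>n g h"
    and ipn_mult_left: "ip\<^sub>n (\<lambda>u. c * f u) h = c * ip\<^sub>n f h"
    and ipn_minus_left: "ip\<^sub>n (\<lambda>u. - f u) h = - ip\<^sub>n f h"
  unfolding ipn_def
  by (simp_all add: algebra_simps sum.distrib sum_subtractf sum_distrib_left sum_negf)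

lemma ipn_right_linear:
  shows ipn_add_right: "ip\<^sub>n h (\<lambda>u. f u + g u) = ip\<^sub>n h f + ip\<^sub>n h g"
    and ipn_diff_right: "ip\<^sub>n h (\<lambda>u. f u - g u) = ip\<^sub>n h f - ip\<^sub>n h g"
    and ipn_mult_right: "ip\<^sub>n h (\<lambda>u. c * f u) = c * ip\<^sub>n h f"
    and ipn_minus_right: "ip\<^sub>n h (\<lambda>u. - f u) = - ip\<^sub>n h f"
  by (metis ipn_commute ipn_left_linear)+

lemmas ipn_linear = ipn_left_linear ipn_right_linear

lemma ipn_cong: "(\<And>u. u \<in> Y\<^sub>n \<Longrightarrow> g u = g' u) \<Longrightarrow> ip\<^sub>n f g = ip\<^sub>n f g'"
  unfolding ipn_def by (metis (no_types, lifting) sum.cong)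

lemma ipn_as_mass: "ip\<^sub>n f g = ip\<^sub>n (\<lambda>u. f u * g u) (\<lambda>_. 1)"
  unfolding ipn_def by simp

lemma ip0_commute: "ip\<^sub>0 f g = ip\<^sub>0 g f"
  unfolding ip0_def by (simp add: mult.commute)

lemma ip0_left_linear:
  shows ip0_add_left: "ip\<^sub>0 (\<lambda>x. f x + g x) h = ip\<^sub>0 f h + ip\<^sub>0 g h"
    and ip0_diff_left: "ip\<^sub>0 (\<lambda>x. f x - g x) h = ip\<^sub>0 f h - ip\<^sub>0 g h"
    and ip0_mult_left: "ip\<^sub>0 (\<lambda>x. c * f x) h = c * ip\<^sub>0 f h"
    and ip0_minus_left: "ip\<^sub>0 (\<lambda>x. - f x) h = - ip\<^sub>0 f h"
  unfolding ip0_def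
  by (simp_all add: algebra_simps sum.distrib sum_subtractf sum_distrib_left sum_negf)

lemma ip0_right_linear:
  shows ip0_add_right: "ip\<^sub>0 h (\<lambda>x. f x + g x) = ip\<^sub>0 h f + ip\<^sub>0 h g"
    and ip0_diff_right: "ip\<^sub>0 h (\<lambda>x. f x - g x) = ip\<^sub>0 h f - ip\<^sub>0 h g"
    and ip0_mult_right: "ip\<^sub>0 h (\<lambda>x. c * f x) = c * ip\<^sub>0 h f"
    and ip0_minus_right: "ip\<^sub>0 h (\<lambda>x. - f x) = - ip\<^sub>0 h f"
  by (metis ip0_commute ip0_left_linear)+

lemmas ip0_linear = ip0_left_linear ip0_right_linear

lemma lap_linear:
  shows lap_add: "\<Delta> (\<lambda>u. f u + g u) = (\<lambda>u. \<Delta> f u + \<Delta> g u)"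
    and lap_mult: "\<Delta> (\<lambda>u. c * f u) = (\<lambda>u. c * \<Delta> f u)"
    and lap_const: "\<Delta> (\<lambda>_. c) = (\<lambda>_. 0)"
  unfolding lap_def by (simp_all add: algebra_simps)

lemma ipn_lap_symmetric: "ip\<^sub>n f (\<Delta> g) = ip\<^sub>n g (\<Delta> f)"
proof -
  define S where "S f g e = (\<Sum>u\<in>Y\<^sub>n. f u * (g (wrap (padd u e)) + g (wrap (padd u (pneg e)))))"
    for f g :: field and e
  have S_sym: "S f g e = S g f e" for f g e
    using sum_mult_wrap_shift[of f g e] sum_mult_wrap_shift[of f g "pneg e"]
    unfolding S_def by (simp add: distrib_left sum.distrib)
  have centre: "(\<Sum>u\<in>Y\<^sub>n. f u * g (wrap u)) = (\<Sum>u\<in>Y\<^sub>n. g u * f (wrap u))" for f g :: field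
    by (rule sum.cong) (simp_all add: wrap_Yn mult.commute)
  have pneg_units: "pneg (0,1,0,0) = (0,-1,0,0)" "pneg (0,0,1,0) = (0,0,-1,0)"
    "pneg (0,0,0,1) = (0,0,0,-1)"
    by (simp_all add: pneg_def)
  have expand: "(\<Sum>u\<in>Y\<^sub>n. f u * \<Delta> g u) = of_nat N ^ 2 *
      (S f g (0,1,0,0) + S f g (0,0,1,0) + S f g (0,0,0,1) - 6 * (\<Sum>u\<in>Y\<^sub>n. f u * g (wrap u)))"
    for f g :: field
    unfolding S_def lap_def pneg_units
    by (simp add: algebra_simps sum.distrib sum_subtractf sum_distrib_left)
  show ?thesis
    unfolding ipn_def expand S_sym[of f g] centre[of f g] ..
qed

lemma Qn_linear:
  shows Qn_add: "Q (\<lambda>u. f u + g u) = (\<lambda>x. Q f x + Q g x)"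
    and Qn_mult: "Q (\<lambda>u. c * f u) = (\<lambda>x. c * Q f x)"
    and Qn_const: "Q (\<lambda>_. c) = (\<lambda>_. c)"
  unfolding Qn_def using card_blk_pos
  by (simp_all add: algebra_simps sum.distrib sum_distrib_left)

lemma ipn_Qn_adj: "ip\<^sub>n f (Qadj g) = ip\<^sub>0 (Q f) g"
proof -
  let ?c = "of_nat (card (blk T N)) :: complex"
  let ?h = "\<lambda>x j. wrap (padd (emb T N x) j)"
  have weight: "(1 / of_nat T) * (1 / of_nat N) ^ 3 * (of_nat T * of_nat N ^ 3) = (1::complex)"
    using T_pos N_pos by (simp add: field_simps)
  have "ip\<^sub>n f (Qadj g) = (1 / of_nat T) * (1 / of_nat N) ^ 3 * (of_nat T * of_nat N ^ 3) * (1 / ?c) *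
     (\<Sum>u\<in>Y\<^sub>n. \<Sum>x\<in>Y\<^sub>0. f u * (of_nat (card {j\<in>blk T N. ?h x j = u}) * g x))"
    unfolding ipn_def Qn_adj_def by (simp add: sum_distrib_left mult_ac)
  also have "\<dots> = (1 / ?c) * (\<Sum>x\<in>Y\<^sub>0. g x * (\<Sum>u\<in>Y\<^sub>n. of_nat (card {j\<in>blk T N. ?h x j = u}) * f u))"
    unfolding weight by (subst sum.swap) (simp add: sum_distrib_left mult_ac)
  also have "\<dots> = (1 / ?c) * (\<Sum>x\<in>Y\<^sub>0. g x * (\<Sum>j\<in>blk T N. f (?h x j)))"
    using sum_card_fibres[OF finite_blk finite_Yn, of "?h x" f for x] wrap_in_Yn
    by (simp add: image_subset_iff)
  also have "\<dots> = ip\<^sub>0 (Q f) g"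
    unfolding ip0_def Qn_def by (simp add: sum_distrib_left mult_ac)
  finally show ?thesis .
qed

lemma norm_Qn_le:
  assumes "\<And>u. u \<in> Y\<^sub>n \<Longrightarrow> norm (g u) \<le> A"
  shows "norm (Q g x) \<le> A"
proof -
  have "norm (Q g x) = (1 / card (blk T N)) * norm (\<Sum>j\<in>blk T N. g (wrap (padd (emb T N x) j)))"
    unfolding Qn_def by (simp add: norm_mult norm_divide)
  also have "\<dots> \<le> (1 / card (blk T N)) * (card (blk T N) * A)"
    by (intro mult_left_mono sum_norm_bound) (use assms wrap_in_Yn in auto)
  also have "\<dots> = A"
    using card_blk_pos by simp
  finally show ?thesis .
qed

lemma norm_lap_le:
  assumes "\<And>u. u \<in> Y\<^sub>n \<Longrightarrow> norm (g u) \<le> A"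
  shows "norm (\<Delta> g u) \<le> 12 * real N ^ 2 * A"
proof -
  have g: "norm (g (wrap w)) \<le> A" for w
    using assms wrap_in_Yn by blast
  have second_difference: "norm (a + b - 2 * c) \<le> 4 * A"
    if "norm a \<le> A" "norm b \<le> A" "norm c \<le> A" for a b c :: complex
  proof -
    have "norm (a + b - 2 * c) \<le> norm a + norm b + 2 * norm c"
      using norm_triangle_ineq4[of "a + b" "2 * c"] norm_triangle_ineq[of a b]
      by (simp add: norm_mult)
    with that show ?thesis by linarith
  qed
  have sum3: "norm (p + q + r) \<le> norm p + norm q + norm r" for p q r :: complex
    by (metis add_mono norm_triangle_ineq order_trans order_refl)
  have "norm (\<Delta> g u) \<le> real N ^ 2 * (4 * A + 4 * A + 4 * A)"
    unfolding lap_def norm_mult norm_power norm_of_nat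
    by (rule mult_left_mono, rule order_trans[OF sum3], intro add_mono second_difference g) simp
  then show ?thesis by simp
qed

definition volume :: real where
  "volume = real (card Y\<^sub>n) / (real T * real N ^ 3)"

lemma norm_ipn_le:
  assumes "\<And>u. u \<in> Y\<^sub>n \<Longrightarrow> norm (f u * g u) \<le> A"
  shows "norm (ip\<^sub>n f g) \<le> volume * A"
proof -
  have "norm (ip\<^sub>n f g) = norm (\<Sum>u\<in>Y\<^sub>n. f u * g u) / (real T * real N ^ 3)"
    unfolding ipn_def by (simp add: norm_mult norm_divide norm_power field_simps)
  also have "\<dots> \<le> real (card Y\<^sub>n) * A / (real T * real N ^ 3)"
    by (intro divide_right_mono sum_norm_bound assms) auto
  finally show ?thesis
    by (simp add: volume_def)
qed

lemma coarse_factor_linearization: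
  assumes "\<epsilon> \<le> 1/2" "norm z \<le> \<epsilon>" "\<And>u. u \<in> Y\<^sub>n \<Longrightarrow> norm (w u) \<le> \<epsilon>"
  shows "norm (exp z - Q (\<lambda>u. exp (w u)) x - (z - Q w x)) \<le> 4 * \<epsilon>\<^sup>2"
proof -
  have "Q (\<lambda>u. exp (w u)) x = Q (\<lambda>u. (1 + w u) + (exp (w u) - 1 - w u)) x"
    by simp
  also have "\<dots> = 1 + Q w x + Q (\<lambda>u. exp (w u) - 1 - w u) x"
    by (simp only: Qn_add Qn_const)
  finally have split: "exp z - Q (\<lambda>u. exp (w u)) x - (z - Q w x)
      = (exp z - 1 - z) - Q (\<lambda>u. exp (w u) - 1 - w u) x"
    by simp
  have "norm (Q (\<lambda>u. exp (w u) - 1 - w u) x) \<le> 2 * \<epsilon>\<^sup>2"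
    by (rule norm_Qn_le) (rule norm_exp_minus_linear_le[OF assms(3) assms(1)])
  then show ?thesis
    unfolding split using norm_triangle_ineq4[of "exp z - 1 - z" "Q (\<lambda>u. exp (w u) - 1 - w u) x"]
      norm_exp_minus_linear_le[OF assms(2,1)]
    by linarith
qed

lemma coarse_term_cubic_error:
  fixes R \<Theta> X H :: field and m :: real
  assumes "0 \<le> m" and m: "m \<le> 1/8"
    and bound0: "\<And>x. x \<in> Y\<^sub>0 \<Longrightarrow> norm (R x) \<le> m \<and> norm (\<Theta> x) \<le> m"
    and boundn: "\<And>u. u \<in> Y\<^sub>n \<Longrightarrow> norm (X u) \<le> m \<and> norm (H u) \<le> m"
  shows "norm (ip\<^sub>0 (\<lambda>x. exp (R x - \<i> * \<Theta> x) - Q (\<lambda>u. exp (X u - \<i> * H u)) x)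
                   (\<lambda>x. exp (R x + \<i> * \<Theta> x) - Q (\<lambda>u. exp (X u + \<i> * H u)) x)
             - (ip\<^sub>0 (\<lambda>x. R x - Q X x) (\<lambda>x. R x - Q X x) + ip\<^sub>0 (\<lambda>x. \<Theta> x - Q H x) (\<lambda>x. \<Theta> x - Q H x)))
         \<le> card Y\<^sub>0 * (192 * m ^ 3)"
proof -
  define L where "L s x = R x + s * \<Theta> x - (Q X x + s * Q H x)" for s x
  define S where "S s x = exp (R x + s * \<Theta> x) - Q (\<lambda>u. exp (X u + s * H u)) x - L s x" for s x
  have factor: "norm (L s x) \<le> 4 * m \<and> norm (S s x) \<le> 16 * m\<^sup>2"
    if "x \<in> Y\<^sub>0" "norm s = 1" for s x
  proof -
    have z: "norm (R x + s * \<Theta> x) \<le> 2 * m"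
      using norm_triangle_ineq[of "R x" "s * \<Theta> x"] bound0[OF \<open>x \<in> Y\<^sub>0\<close>] \<open>norm s = 1\<close>
      by (simp add: norm_mult)
    have w: "norm (X u + s * H u) \<le> 2 * m" if "u \<in> Y\<^sub>n" for u
      using norm_triangle_ineq[of "X u" "s * H u"] boundn[OF that] \<open>norm s = 1\<close>
      by (simp add: norm_mult)
    have Qw: "Q (\<lambda>u. X u + s * H u) x = Q X x + s * Q H x"
      by (simp add: Qn_add Qn_mult)
    have "norm (L s x) \<le> norm (R x + s * \<Theta> x) + norm (Q (\<lambda>u. X u + s * H u) x)"
      unfolding L_def Qw by (rule norm_triangle_ineq4)
    also have "\<dots> \<le> 2 * m + 2 * m"
      using z norm_Qn_le[OF w] by (rule add_mono)
    finally have "norm (L s x) \<le> 4 * m"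
      by simp
    moreover have "norm (S s x) \<le> 4 * (2 * m)\<^sup>2"
      unfolding S_def L_def Qw[symmetric]
      by (rule coarse_factor_linearization[OF _ z w]) (use m in simp)
    ultimately show ?thesis
      by (simp add: power_mult_distrib)
  qed
  have pointwise: "norm ((exp (R x - \<i> * \<Theta> x) - Q (\<lambda>u. exp (X u - \<i> * H u)) x)
          * (exp (R x + \<i> * \<Theta> x) - Q (\<lambda>u. exp (X u + \<i> * H u)) x)
        - ((R x - Q X x) * (R x - Q X x) + (\<Theta> x - Q H x) * (\<Theta> x - Q H x))) \<le> 192 * m ^ 3"
    if "x \<in> Y\<^sub>0" for x
  proof -
    have "L (- \<i>) x * L \<i> x = (R x - Q X x) * (R x - Q X x) + (\<Theta> x - Q H x) * (\<Theta> x - Q H x)"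
      unfolding L_def by (simp add: algebra_simps)
    moreover have "16 * m\<^sup>2 \<le> 4 * m"
      using mult_left_mono[OF m \<open>0 \<le> m\<close>] \<open>0 \<le> m\<close> unfolding power2_eq_square by linarith
    then have "norm ((L (- \<i>) x + S (- \<i>) x) * (L \<i> x + S \<i> x) - L (- \<i>) x * L \<i> x)
        \<le> 3 * (4 * m * (16 * m\<^sup>2))"
      using factor[OF that, of "- \<i>"] factor[OF that, of \<i>] by (intro norm_mult_perturb_le) auto
    ultimately show ?thesis
      by (simp add: S_def power2_eq_square power3_eq_cube)
  qed
  show ?thesis
    unfolding ip0_def sum_subtractf[symmetric] sum.distrib[symmetric]
    by (rule sum_norm_bound) (rule pointwise)
qed

end

locale action_setting = periodic_lattices +
  fixes K :: "pt \<Rightarrow> pt \<Rightarrow> complex" and d \<mu> v :: real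
  assumes d_pos: "d > 0" and \<mu>_pos: "\<mu> > 0" and v_pos: "v > 0"
    and kop_antisym: "\<forall>f g. ipn T N M0 M (kop T N M0 M K f) g = - ipn T N M0 M f (kop T N M0 M K g)"
    and kop_const: "\<forall>u\<in>Yn T N M0 M. kop T N M0 M K (\<lambda>_. 1) u = 0"
begin

abbreviation "dt \<equiv> kop T N M0 M K"
abbreviation "dt_adj \<equiv> kop_adj T N M0 M K"

definition D :: "field \<Rightarrow> field" where
  "D g = (\<lambda>u. - of_real d * dt g u - \<Delta> g u)"

lemma kop_linear:
  shows kop_add: "dt (\<lambda>u. f u + g u) = (\<lambda>u. dt f u + dt g u)"
    and kop_mult: "dt (\<lambda>u. c * f u) = (\<lambda>u. c * dt f u)"
  unfolding kop_def by (simp_all add: algebra_simps sum.distrib sum_distrib_left)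

lemma ipn_kop_adj: "ip\<^sub>n f (dt_adj g) = ip\<^sub>n g (dt f)"
  unfolding ipn_def kop_adj_def kop_def
  by (simp add: sum_distrib_left, subst sum.swap, simp add: mult_ac)

lemma ipn_kop_swap: "ip\<^sub>n f (dt g) = - ip\<^sub>n g (dt f)"
  using kop_antisym ipn_commute by metis

lemma ipn_kop_self: "ip\<^sub>n f (dt f) = 0"
  using ipn_kop_swap[of f f] by simp

definition kernel_norm :: real where
  "kernel_norm = (\<Sum>u\<in>Y\<^sub>n. \<Sum>u'\<in>Y\<^sub>n. norm (K u u'))"

lemma norm_kop_le:
  assumes "\<And>u. u \<in> Y\<^sub>n \<Longrightarrow> norm (g u) \<le> A" "A \<ge> 0" "u \<in> Y\<^sub>n"
  shows "norm (dt g u) \<le> kernel_norm * A"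
proof -
  have "norm (dt g u) \<le> (\<Sum>u'\<in>Y\<^sub>n. norm (K u u') * A)"
    unfolding kop_def using assms
    by (intro order_trans[OF norm_sum] sum_mono) (auto simp: norm_mult intro: mult_left_mono)
  also have "\<dots> = (\<Sum>u'\<in>Y\<^sub>n. norm (K u u')) * A"
    by (simp add: sum_distrib_right)
  also have "\<dots> \<le> kernel_norm * A"
    unfolding kernel_norm_def
  proof (rule mult_right_mono[OF _ \<open>A \<ge> 0\<close>])
    show "(\<Sum>u'\<in>Y\<^sub>n. norm (K u u')) \<le> (\<Sum>w\<in>Y\<^sub>n. \<Sum>u'\<in>Y\<^sub>n. norm (K w u'))"
      using finite_Yn \<open>u \<in> Y\<^sub>n\<close> by (intro member_le_sum sum_nonneg) auto
  qed
  finally show ?thesis .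
qed

definition D_norm :: real where
  "D_norm = d * kernel_norm + 12 * real N ^ 2"

lemma D_norm_nonneg: "D_norm \<ge> 0"
  unfolding D_norm_def kernel_norm_def using d_pos by (simp add: sum_nonneg)

lemma norm_D_le:
  assumes "\<And>u. u \<in> Y\<^sub>n \<Longrightarrow> norm (g u) \<le> A" "A \<ge> 0" "u \<in> Y\<^sub>n"
  shows "norm (D g u) \<le> D_norm * A"
proof -
  have "norm (D g u) \<le> d * norm (dt g u) + norm (\<Delta> g u)"
    unfolding D_def using norm_triangle_ineq4[of "- of_real d * dt g u" "\<Delta> g u"] d_pos
    by (simp add: norm_mult)
  also have "\<dots> \<le> d * (kernel_norm * A) + 12 * real N ^ 2 * A"
    using norm_kop_le[OF assms] norm_lap_le[OF assms(1)] d_pos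
    by (intro add_mono mult_left_mono) auto
  finally show ?thesis
    by (simp add: D_norm_def algebra_simps)
qed

lemma D_add: "D (\<lambda>u. f u + g u) = (\<lambda>u. D f u + D g u)"
  unfolding D_def kop_add lap_add by (simp add: algebra_simps)

lemma D_one_plus: "u \<in> Y\<^sub>n \<Longrightarrow> D (\<lambda>u. 1 + g u) u = D g u"
  using kop_const unfolding D_def kop_add lap_add lap_const by simp

lemma ipn_one_D: "ip\<^sub>n (\<lambda>_. 1) (D g) = 0"
proof -
  have "ip\<^sub>n (\<lambda>_. 1) (dt g) = 0"
    using ipn_kop_swap[of "\<lambda>_. 1" g] kop_const unfolding ipn_def by simp
  moreover have "ip\<^sub>n (\<lambda>_. 1) (\<Delta> g) = 0"
    using ipn_lap_symmetric[of "\<lambda>_. 1" g] unfolding lap_const ipn_def by simp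
  ultimately show ?thesis
    unfolding D_def by (simp add: ipn_linear)
qed

lemma quadratic_part_at_solution:
  assumes eq_X: "\<And>u. u \<in> Y\<^sub>n \<Longrightarrow>
      2 * of_real \<mu> * X u - \<Delta> X u + \<i> * of_real d * dt_adj H u + Qadj (Q X) u = Qadj R u"
    and eq_H: "\<And>u. u \<in> Y\<^sub>n \<Longrightarrow>
      \<i> * of_real d * dt X u - \<Delta> H u + Qadj (Q H) u = Qadj \<Theta> u"
  shows "ip\<^sub>0 (\<lambda>x. R x - Q X x) (\<lambda>x. R x - Q X x) + ip\<^sub>0 (\<lambda>x. \<Theta> x - Q H x) (\<lambda>x. \<Theta> x - Q H x)
       + ip\<^sub>n (\<lambda>u. X u - \<i> * H u) (D (\<lambda>u. X u + \<i> * H u)) + 2 * of_real \<mu> * ip\<^sub>n X X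
     = ip\<^sub>0 R (\<lambda>x. R x - Q X x) + ip\<^sub>0 \<Theta> (\<lambda>x. \<Theta> x - Q H x)"
proof -
  have "ip\<^sub>n X (\<lambda>u. 2 * of_real \<mu> * X u - \<Delta> X u + \<i> * of_real d * dt_adj H u + Qadj (Q X) u)
      = ip\<^sub>n X (Qadj R)"
    by (rule ipn_cong) (rule eq_X)
  then have paired_X: "2 * of_real \<mu> * ip\<^sub>n X X - ip\<^sub>n X (\<Delta> X) + \<i> * of_real d * ip\<^sub>n H (dt X)
      + ip\<^sub>0 (Q X) (Q X) = ip\<^sub>0 (Q X) R"
    by (simp add: ipn_linear ipn_kop_adj ipn_Qn_adj)
  have "ip\<^sub>n H (\<lambda>u. \<i> * of_real d * dt X u - \<Delta> H u + Qadj (Q H) u) = ip\<^sub>n H (Qadj \<Theta>)"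
    by (rule ipn_cong) (rule eq_H)
  then have paired_H: "\<i> * of_real d * ip\<^sub>n H (dt X) - ip\<^sub>n H (\<Delta> H) + ip\<^sub>0 (Q H) (Q H)
      = ip\<^sub>0 (Q H) \<Theta>"
    by (simp add: ipn_linear ipn_Qn_adj)
  have swaps: "ip\<^sub>n X (\<Delta> H) = ip\<^sub>n H (\<Delta> X)" "ip\<^sub>n X (dt H) = - ip\<^sub>n H (dt X)"
    "ip\<^sub>0 R (Q X) = ip\<^sub>0 (Q X) R" "ip\<^sub>0 \<Theta> (Q H) = ip\<^sub>0 (Q H) \<Theta>"
    by (rule ipn_lap_symmetric ipn_kop_swap ip0_commute)+
  have kinetic: "ip\<^sub>n (\<lambda>u. X u - \<i> * H u) (D (\<lambda>u. X u + \<i> * H u))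
      = 2 * \<i> * of_real d * ip\<^sub>n H (dt X) - ip\<^sub>n X (\<Delta> X) - ip\<^sub>n H (\<Delta> H)"
    unfolding D_def by (simp add: ipn_linear kop_linear lap_linear ipn_kop_self swaps algebra_simps)
  have QX: "ip\<^sub>0 (Q X) (Q X)
      = ip\<^sub>0 (Q X) R - (2 * of_real \<mu> * ip\<^sub>n X X - ip\<^sub>n X (\<Delta> X) + \<i> * of_real d * ip\<^sub>n H (dt X))"
    using paired_X by (simp add: algebra_simps)
  have QH: "ip\<^sub>0 (Q H) (Q H) = ip\<^sub>0 (Q H) \<Theta> - (\<i> * of_real d * ip\<^sub>n H (dt X) - ip\<^sub>n H (\<Delta> H))"
    using paired_H by (simp add: algebra_simps)
  show ?thesis
    by (simp add: ip0_linear kinetic QX QH swaps algebra_simps)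
qed

lemma action_polar_form:
  assumes r: "v * r\<^sup>2 = \<mu>"
  shows "An T N M0 M K d \<mu> v (\<lambda>x. of_real r * exp (R x - \<i> * \<Theta> x)) (\<lambda>x. of_real r * exp (R x + \<i> * \<Theta> x))
           (\<lambda>u. of_real r * exp (X u - \<i> * H u)) (\<lambda>u. of_real r * exp (X u + \<i> * H u))
   = of_real (r\<^sup>2) *
      (ip\<^sub>0 (\<lambda>x. exp (R x - \<i> * \<Theta> x) - Q (\<lambda>u. exp (X u - \<i> * H u)) x)
           (\<lambda>x. exp (R x + \<i> * \<Theta> x) - Q (\<lambda>u. exp (X u + \<i> * H u)) x)
     + ip\<^sub>n (\<lambda>u. exp (X u - \<i> * H u)) (D (\<lambda>u. exp (X u + \<i> * H u)))
     + of_real \<mu> * ip\<^sub>n (\<lambda>u. exp (4 * X u) / 2 - exp (2 * X u)) (\<lambda>_. 1))"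
proof -
  let ?r = "of_real r :: complex"
  have coarse: "ip\<^sub>0 (\<lambda>x. ?r * exp (R x - \<i> * \<Theta> x) - Q (\<lambda>u. ?r * exp (X u - \<i> * H u)) x)
                   (\<lambda>x. ?r * exp (R x + \<i> * \<Theta> x) - Q (\<lambda>u. ?r * exp (X u + \<i> * H u)) x)
     = ?r\<^sup>2 * ip\<^sub>0 (\<lambda>x. exp (R x - \<i> * \<Theta> x) - Q (\<lambda>u. exp (X u - \<i> * H u)) x)
                   (\<lambda>x. exp (R x + \<i> * \<Theta> x) - Q (\<lambda>u. exp (X u + \<i> * H u)) x)"
    unfolding Qn_mult ip0_def by (simp add: sum_distrib_left algebra_simps power2_eq_square)
  have kinetic: "ip\<^sub>n (\<lambda>u. ?r * exp (X u - \<i> * H u))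
        (\<lambda>u. - of_real d * dt (\<lambda>u. ?r * exp (X u + \<i> * H u)) u - \<Delta> (\<lambda>u. ?r * exp (X u + \<i> * H u)) u)
     = ?r\<^sup>2 * ip\<^sub>n (\<lambda>u. exp (X u - \<i> * H u)) (D (\<lambda>u. exp (X u + \<i> * H u)))"
    unfolding D_def kop_mult lap_mult ipn_def by (simp add: sum_distrib_left algebra_simps power2_eq_square)
  have density: "?r * exp (X u - \<i> * H u) * (?r * exp (X u + \<i> * H u)) = ?r\<^sup>2 * exp (2 * X u)" for u
    by (simp add: power2_eq_square mult_ac exp_add[symmetric])
  have potential: "- of_real \<mu> * ip\<^sub>n (\<lambda>u. ?r * exp (X u - \<i> * H u)) (\<lambda>u. ?r * exp (X u + \<i> * H u))
      + of_real v / 2 * ip\<^sub>n (\<lambda>u. ?r * exp (X u - \<i> * H u) * (?r * exp (X u + \<i> * H u)))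
                            (\<lambda>u. ?r * exp (X u - \<i> * H u) * (?r * exp (X u + \<i> * H u)))
     = ?r\<^sup>2 * (of_real \<mu> * ip\<^sub>n (\<lambda>u. exp (4 * X u) / 2 - exp (2 * X u)) (\<lambda>_. 1))"
  proof -
    have \<mu>_eq: "of_real \<mu> = of_real v * ?r\<^sup>2"
      using r by (metis of_real_mult of_real_power)
    have pointwise: "- of_real \<mu> * (?r\<^sup>2 * exp (2 * X u))
        + of_real v / 2 * (?r\<^sup>2 * exp (2 * X u) * (?r\<^sup>2 * exp (2 * X u)))
      = ?r\<^sup>2 * (of_real \<mu> * (exp (4 * X u) / 2 - exp (2 * X u)))" for u
      unfolding \<mu>_eq by (simp add: algebra_simps power2_eq_square exp_add[symmetric])
    have "- of_real \<mu> * ip\<^sub>n (\<lambda>u. ?r * exp (X u - \<i> * H u)) (\<lambda>u. ?r * exp (X u + \<i> * H u))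
      + of_real v / 2 * ip\<^sub>n (\<lambda>u. ?r * exp (X u - \<i> * H u) * (?r * exp (X u + \<i> * H u)))
                            (\<lambda>u. ?r * exp (X u - \<i> * H u) * (?r * exp (X u + \<i> * H u)))
      = ip\<^sub>n (\<lambda>u. - of_real \<mu> * (?r\<^sup>2 * exp (2 * X u))
        + of_real v / 2 * (?r\<^sup>2 * exp (2 * X u) * (?r\<^sup>2 * exp (2 * X u)))) (\<lambda>_. 1)"
      by (subst (1 2) ipn_as_mass) (simp only: density ipn_add_left ipn_mult_left)
    also have "\<dots> = ?r\<^sup>2 * (of_real \<mu> * ip\<^sub>n (\<lambda>u. exp (4 * X u) / 2 - exp (2 * X u)) (\<lambda>_. 1))"
      unfolding pointwise ipn_mult_left ..
    finally show ?thesis .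
  qed
  show ?thesis
    unfolding An_def coarse using kinetic potential by (simp add: algebra_simps)
qed

lemma kinetic_term_cubic_error:
  fixes X H :: field and m :: real
  assumes "0 \<le> m" "m \<le> 1/8"
    and boundn: "\<And>u. u \<in> Y\<^sub>n \<Longrightarrow> norm (X u) \<le> m \<and> norm (H u) \<le> m"
  shows "norm (ip\<^sub>n (\<lambda>u. exp (X u - \<i> * H u)) (D (\<lambda>u. exp (X u + \<i> * H u)))
             - ip\<^sub>n (\<lambda>u. X u - \<i> * H u) (D (\<lambda>u. X u + \<i> * H u)))
         \<le> volume * (48 * D_norm * m ^ 3)"
proof -
  define p where "p u = X u + \<i> * H u" for u
  define q where "q u = X u - \<i> * H u" for u
  define rp where "rp u = exp (p u) - 1 - p u" for u
  define rq where "rq u = exp (q u) - 1 - q u" for u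
  have pq: "norm (p u) \<le> 2 * m" "norm (q u) \<le> 2 * m" if "u \<in> Y\<^sub>n" for u
    using boundn[OF that] norm_triangle_ineq[of "X u" "\<i> * H u"] norm_triangle_ineq4[of "X u" "\<i> * H u"]
    unfolding p_def q_def by (auto simp: norm_mult)
  have small: "2 * m \<le> 1/2"
    using assms by simp
  have rp: "norm (rp u) \<le> 2 * (2 * m)\<^sup>2" and rq: "norm (rq u) \<le> 2 * (2 * m)\<^sup>2"
    and eq1: "norm (exp (q u) - 1) \<le> 2 * (2 * m)" if "u \<in> Y\<^sub>n" for u
    unfolding rp_def rq_def
    by (intro norm_exp_minus_linear_le norm_exp_minus_one_le pq[OF that] small)+
  have Dp: "norm (D p u) \<le> D_norm * (2 * m)" and Drp: "norm (D rp u) \<le> D_norm * (2 * (2 * m)\<^sup>2)"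
    if "u \<in> Y\<^sub>n" for u
    using that \<open>0 \<le> m\<close> by (intro norm_D_le pq rp; simp)+
  text \<open>Since \<open>D\<close> kills constants and \<open>\<langle>1, D g\<rangle> = 0\<close>, only products of a remainder
    with a term of order at least one survive.\<close>
  have "D (\<lambda>u. exp (p u)) u = D p u + D rp u" if "u \<in> Y\<^sub>n" for u
  proof -
    have "D (\<lambda>u. exp (p u)) u = D (\<lambda>u. 1 + (p u + rp u)) u"
      by (simp add: rp_def)
    also have "\<dots> = D p u + D rp u"
      using D_one_plus[OF that] by (simp add: D_add)
    finally show ?thesis .
  qed
  then have "ip\<^sub>n (\<lambda>u. exp (q u)) (D (\<lambda>u. exp (p u))) = ip\<^sub>n (\<lambda>u. exp (q u)) (\<lambda>u. D p u + D rp u)"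
    by (rule ipn_cong)
  also have "\<dots> = ip\<^sub>n q (D p) + ip\<^sub>n rq (D p) + ip\<^sub>n (\<lambda>u. exp (q u) - 1) (D rp)"
  proof -
    have "(\<lambda>u. exp (q u)) = (\<lambda>u. 1 + q u + rq u)"
      by (simp add: rq_def)
    then have "ip\<^sub>n (\<lambda>u. exp (q u)) (D p) = ip\<^sub>n q (D p) + ip\<^sub>n rq (D p)"
      by (simp add: ipn_add_left ipn_one_D)
    moreover have "ip\<^sub>n (\<lambda>u. exp (q u)) (D rp) = ip\<^sub>n (\<lambda>u. exp (q u) - 1) (D rp)"
      by (simp add: ipn_diff_left ipn_one_D)
    ultimately show ?thesis
      by (simp add: ipn_add_right)
  qed
  finally have split: "ip\<^sub>n (\<lambda>u. exp (q u)) (D (\<lambda>u. exp (p u))) - ip\<^sub>n q (D p)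
      = ip\<^sub>n rq (D p) + ip\<^sub>n (\<lambda>u. exp (q u) - 1) (D rp)"
    by simp
  have "norm (ip\<^sub>n rq (D p)) \<le> volume * (16 * D_norm * m ^ 3)"
  proof (rule norm_ipn_le)
    fix u assume "u \<in> Y\<^sub>n"
    have "norm (rq u * D p u) \<le> 2 * (2 * m)\<^sup>2 * (D_norm * (2 * m))"
      unfolding norm_mult using \<open>u \<in> Y\<^sub>n\<close> D_norm_nonneg \<open>0 \<le> m\<close>
      by (intro mult_mono rq Dp) auto
    then show "norm (rq u * D p u) \<le> 16 * D_norm * m ^ 3"
      by (simp add: power2_eq_square power3_eq_cube algebra_simps)
  qed
  moreover have "norm (ip\<^sub>n (\<lambda>u. exp (q u) - 1) (D rp)) \<le> volume * (32 * D_norm * m ^ 3)"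
  proof (rule norm_ipn_le)
    fix u assume "u \<in> Y\<^sub>n"
    have "norm ((exp (q u) - 1) * D rp u) \<le> 2 * (2 * m) * (D_norm * (2 * (2 * m)\<^sup>2))"
      unfolding norm_mult using \<open>u \<in> Y\<^sub>n\<close> D_norm_nonneg \<open>0 \<le> m\<close>
      by (intro mult_mono eq1 Drp) auto
    then show "norm ((exp (q u) - 1) * D rp u) \<le> 32 * D_norm * m ^ 3"
      by (simp add: power2_eq_square power3_eq_cube algebra_simps)
  qed
  ultimately show ?thesis
    unfolding p_def[symmetric] q_def[symmetric] split
    using norm_triangle_ineq[of "ip\<^sub>n rq (D p)" "ip\<^sub>n (\<lambda>u. exp (q u) - 1) (D rp)"]
    by (simp add: algebra_simps)
qed

lemma potential_term_cubic_error:
  fixes X :: field and m :: real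
  assumes "0 \<le> m" "m \<le> 1/8" and boundn: "\<And>u. u \<in> Y\<^sub>n \<Longrightarrow> norm (X u) \<le> m"
  shows "norm (of_real \<mu> * ip\<^sub>n (\<lambda>u. exp (4 * X u) / 2 - exp (2 * X u)) (\<lambda>_. 1)
             - (2 * of_real \<mu> * ip\<^sub>n X X - of_real \<mu> / 2 * ip\<^sub>n (\<lambda>_. 1) (\<lambda>_. 1)))
         \<le> volume * (80 * \<mu> * m ^ 3)"
proof -
  define \<rho> where "\<rho> z = exp z - 1 - z - z\<^sup>2 / 2" for z :: complex
  have \<rho>_bound: "norm (\<rho> (of_real c * X u)) \<le> 2 * (c * m) ^ 3"
    if "u \<in> Y\<^sub>n" "0 \<le> c" "c \<le> 4" for u c
  proof -
    have "c * m \<le> 4 * m"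
      using that \<open>0 \<le> m\<close> by (intro mult_right_mono) auto
    then show ?thesis
      unfolding \<rho>_def using boundn[OF that(1)] that(2) assms
      by (intro norm_exp_minus_quadratic_le) (auto simp: norm_mult intro: mult_left_mono)
  qed
  have "of_real \<mu> * ip\<^sub>n (\<lambda>u. exp (4 * X u) / 2 - exp (2 * X u)) (\<lambda>_. 1)
      - (2 * of_real \<mu> * ip\<^sub>n X X - of_real \<mu> / 2 * ip\<^sub>n (\<lambda>_. 1) (\<lambda>_. 1))
      = ip\<^sub>n (\<lambda>u. of_real \<mu> * (exp (4 * X u) / 2 - exp (2 * X u))
                 - (2 * of_real \<mu> * (X u * X u) - of_real \<mu> / 2)) (\<lambda>_. 1)"
    unfolding ipn_def by (simp add: sum.distrib sum_subtractf sum_distrib_left sum_divide_distrib algebra_simps)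
  also have "\<dots> = ip\<^sub>n (\<lambda>u. of_real \<mu> * (\<rho> (4 * X u) / 2 - \<rho> (2 * X u))) (\<lambda>_. 1)"
    unfolding \<rho>_def by (rule arg_cong[where f = "\<lambda>f. ip\<^sub>n f (\<lambda>_. 1)"]) (simp add: fun_eq_iff field_simps power2_eq_square)
  also have "norm \<dots> \<le> volume * (80 * \<mu> * m ^ 3)"
  proof (rule norm_ipn_le)
    fix u assume "u \<in> Y\<^sub>n"
    have "norm (\<rho> (4 * X u)) \<le> 128 * m ^ 3" "norm (\<rho> (2 * X u)) \<le> 16 * m ^ 3"
      using \<rho>_bound[OF \<open>u \<in> Y\<^sub>n\<close>, of 4] \<rho>_bound[OF \<open>u \<in> Y\<^sub>n\<close>, of 2]
      by (simp_all add: power_mult_distrib)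
    then have "norm (\<rho> (4 * X u) / 2 - \<rho> (2 * X u)) \<le> 80 * m ^ 3"
      using norm_triangle_ineq4[of "\<rho> (4 * X u) / 2" "\<rho> (2 * X u)"] by (simp add: norm_divide)
    then show "norm (of_real \<mu> * (\<rho> (4 * X u) / 2 - \<rho> (2 * X u)) * 1) \<le> 80 * \<mu> * m ^ 3"
      using \<mu>_pos mult_left_mono[of _ "80 * m ^ 3" \<mu>] by (simp add: norm_mult mult_ac)
  qed
  finally show ?thesis .
qed

lemma sq_inv_solves:
  assumes "sq_invertible T N M0 M K d \<mu>" "u \<in> Y\<^sub>n"
    and "XH = sq_inv T N M0 M K d \<mu> (Qn_adjp T N M0 M (R, \<Theta>))"
  shows "2 * of_real \<mu> * fst XH u - \<Delta> (fst XH) u + \<i> * of_real d * dt_adj (snd XH) u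
           + Qadj (Q (fst XH)) u = Qadj R u"
    and "\<i> * of_real d * dt (fst XH) u - \<Delta> (snd XH) u + Qadj (Q (snd XH)) u = Qadj \<Theta> u"
proof -
  have "suppn T N M0 M XH \<and> eq_on_n T N M0 M (sq T N M0 M K d \<mu> XH) (Qn_adjp T N M0 M (R, \<Theta>))"
    unfolding assms(3) sq_inv_def
    by (rule theI'[OF assms(1)[unfolded sq_invertible_def, rule_format]])
  then show "2 * of_real \<mu> * fst XH u - \<Delta> (fst XH) u + \<i> * of_real d * dt_adj (snd XH) u
           + Qadj (Q (fst XH)) u = Qadj R u"
    and "\<i> * of_real d * dt (fst XH) u - \<Delta> (snd XH) u + Qadj (Q (snd XH)) u = Qadj \<Theta> u"
    using assms(2) unfolding eq_on_n_def sq_def Qn_adjp_def by simp_all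
qed

definition radius :: real where
  "radius = sqrt (\<mu> / v)"

lemma radius_sq: "v * radius\<^sup>2 = \<mu>"
  unfolding radius_def using \<mu>_pos v_pos by simp

definition remainder_constant :: real where
  "remainder_constant = real (card Y\<^sub>0) * 192 + volume * (48 * D_norm + 80 * \<mu>)"

lemma action_cubic_remainder:
  fixes R \<Theta> X H :: field and m :: real
  assumes eq_X: "\<And>u. u \<in> Y\<^sub>n \<Longrightarrow>
      2 * of_real \<mu> * X u - \<Delta> X u + \<i> * of_real d * dt_adj H u + Qadj (Q X) u = Qadj R u"
    and eq_H: "\<And>u. u \<in> Y\<^sub>n \<Longrightarrow>
      \<i> * of_real d * dt X u - \<Delta> H u + Qadj (Q H) u = Qadj \<Theta> u"
    and m: "m = max (max (nrm0 M0 M R) (nrm0 M0 M \<Theta>)) (max (nrmn T N M0 M X) (nrmn T N M0 M H))"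
    and small: "m \<le> 1/8"
  shows "norm (An T N M0 M K d \<mu> v
                 (\<lambda>x. of_real radius * exp (R x - \<i> * \<Theta> x)) (\<lambda>x. of_real radius * exp (R x + \<i> * \<Theta> x))
                 (\<lambda>u. of_real radius * exp (X u - \<i> * H u)) (\<lambda>u. of_real radius * exp (X u + \<i> * H u))
               / of_real (radius\<^sup>2)
             - (ip0p M0 M (R, \<Theta>) (\<lambda>x. R x - Q X x, \<lambda>x. \<Theta> x - Q H x)
                - of_real (radius\<^sup>2 * v / 2) * ip\<^sub>n (\<lambda>_. 1) (\<lambda>_. 1)))
         \<le> remainder_constant * m ^ 3"
proof -
  have bound0: "norm (R x) \<le> m \<and> norm (\<Theta> x) \<le> m" if "x \<in> Y\<^sub>0" for x
    using norm_le_nrm0[OF that, of R] norm_le_nrm0[OF that, of \<Theta>] unfolding m by linarith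
  have boundn: "norm (X u) \<le> m \<and> norm (H u) \<le> m" if "u \<in> Y\<^sub>n" for u
    using norm_le_nrmn[OF that, of X] norm_le_nrmn[OF that, of H] unfolding m by linarith
  have "0 \<le> m"
    using bound0[OF Y0_nonempty] norm_ge_zero order_trans by blast
  define coarse where "coarse = ip\<^sub>0 (\<lambda>x. exp (R x - \<i> * \<Theta> x) - Q (\<lambda>u. exp (X u - \<i> * H u)) x)
      (\<lambda>x. exp (R x + \<i> * \<Theta> x) - Q (\<lambda>u. exp (X u + \<i> * H u)) x)
    - (ip\<^sub>0 (\<lambda>x. R x - Q X x) (\<lambda>x. R x - Q X x) + ip\<^sub>0 (\<lambda>x. \<Theta> x - Q H x) (\<lambda>x. \<Theta> x - Q H x))"
  define kinetic where "kinetic = ip\<^sub>n (\<lambda>u. exp (X u - \<i> * H u)) (D (\<lambda>u. exp (X u + \<i> * H u)))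
    - ip\<^sub>n (\<lambda>u. X u - \<i> * H u) (D (\<lambda>u. X u + \<i> * H u))"
  define potential where "potential = of_real \<mu> * ip\<^sub>n (\<lambda>u. exp (4 * X u) / 2 - exp (2 * X u)) (\<lambda>_. 1)
    - (2 * of_real \<mu> * ip\<^sub>n X X - of_real \<mu> / 2 * ip\<^sub>n (\<lambda>_. 1) (\<lambda>_. 1))"
  have "An T N M0 M K d \<mu> v
          (\<lambda>x. of_real radius * exp (R x - \<i> * \<Theta> x)) (\<lambda>x. of_real radius * exp (R x + \<i> * \<Theta> x))
          (\<lambda>u. of_real radius * exp (X u - \<i> * H u)) (\<lambda>u. of_real radius * exp (X u + \<i> * H u))
        / of_real (radius\<^sup>2)
      - (ip0p M0 M (R, \<Theta>) (\<lambda>x. R x - Q X x, \<lambda>x. \<Theta> x - Q H x)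
         - of_real (radius\<^sup>2 * v / 2) * ip\<^sub>n (\<lambda>_. 1) (\<lambda>_. 1))
      = coarse + kinetic + potential"
  proof -
    have "(of_real (radius\<^sup>2) :: complex) \<noteq> 0" "radius\<^sup>2 * v / 2 = \<mu> / 2"
      using radius_sq \<mu>_pos by (auto simp: mult.commute)
    with quadratic_part_at_solution[OF eq_X eq_H] show ?thesis
      unfolding action_polar_form[OF radius_sq] nonzero_mult_div_cancel_left[OF \<open>of_real (radius\<^sup>2) \<noteq> 0\<close>]
        coarse_def kinetic_def potential_def ip0p_def
      by (simp add: algebra_simps)
  qed
  also have "norm \<dots> \<le> real (card Y\<^sub>0) * (192 * m ^ 3) + volume * (48 * D_norm * m ^ 3)
      + volume * (80 * \<mu> * m ^ 3)"
    unfolding coarse_def kinetic_def potential_def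
    using coarse_term_cubic_error[OF \<open>0 \<le> m\<close> small bound0 boundn]
      kinetic_term_cubic_error[OF \<open>0 \<le> m\<close> small boundn]
      potential_term_cubic_error[OF \<open>0 \<le> m\<close> small, of X] boundn
    by (intro order_trans[OF norm_triangle_ineq] add_mono) auto
  also have "\<dots> = remainder_constant * m ^ 3"
    by (simp add: remainder_constant_def algebra_simps)
  finally show ?thesis .
qed

end

theorem lemmaA1:
  fixes T N M0 M :: nat and K :: "pt \<Rightarrow> pt \<Rightarrow> complex" and d \<mu> v :: real
  assumes "T \<ge> 1" and "N \<ge> 1" and "M0 \<ge> 1" and "M \<ge> 1"
    and "d > 0" and "\<mu> > 0" and "v > 0"
    and antisym: "\<forall>f g. ipn T N M0 M (kop T N M0 M K f) g = - ipn T N M0 M f (kop T N M0 M K g)"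
    and const: "\<forall>u\<in>Yn T N M0 M. kop T N M0 M K (\<lambda>_. 1) u = 0"
    and inv: "sq_invertible T N M0 M K d \<mu>"
  shows "\<exists>C \<delta>. \<delta> > 0 \<and> (\<forall>R \<Theta> :: field.
     let r = sqrt (\<mu> / v);
         XH = sq_inv T N M0 M K d \<mu> (Qn_adjp T N M0 M (R, \<Theta>));
         X = fst XH; H = snd XH;
         \<psi> = (\<lambda>x. of_real r * exp (R x + \<i> * \<Theta> x));
         \<psi>s = (\<lambda>x. of_real r * exp (R x - \<i> * \<Theta> x));
         \<phi> = (\<lambda>u. of_real r * exp (X u + \<i> * H u));
         \<phi>s = (\<lambda>u. of_real r * exp (X u - \<i> * H u));
         m = max (max (nrm0 M0 M R) (nrm0 M0 M \<Theta>)) (max (nrmn T N M0 M X) (nrmn T N M0 M H))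
     in m \<le> \<delta> \<longrightarrow>
        cmod (An T N M0 M K d \<mu> v \<psi>s \<psi> \<phi>s \<phi> / of_real (r^2)
              - (ip0p M0 M (R, \<Theta>)
                   (\<lambda>x. R x - fst (Qnp T N M0 M XH) x, \<lambda>x. \<Theta> x - snd (Qnp T N M0 M XH) x)
                 - of_real (r^2 * v / 2) * ipn T N M0 M (\<lambda>_. 1) (\<lambda>_. 1)))
        \<le> C * m ^ 3)"
proof -
  interpret action_setting T N M0 M K d \<mu> v
    using assms by unfold_locales auto
  show ?thesis
    unfolding Let_def Qnp_def fst_conv snd_conv radius_def[symmetric]
    by (intro exI[of _ remainder_constant] exI[of _ "1/8"] conjI allI impI
        action_cubic_remainder[OF sq_inv_solves(1)[OF inv] sq_inv_solves(2)[OF inv] refl]) simp_all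
qed

end
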